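(* There is an absolute constant $C>0$ such that for every $n\in\mathbb N$ and any positive numbers $\alpha_1,\dots,\alpha_n$ there exist points $z_1,\dots,z_n\in\mathbb T$ with $$\int_{\mathbb D}\left|\sum_{k=1}^n\frac{\alpha_k}{z-z_k}\right|dm(z)\ \le\ C\,\frac{\sum_{k=1}^n\alpha_k^2}{\sum_{k=1}^n\alpha_k}.$$
   Context: $\mathbb D$ is the open unit disc in $\mathbb C$, $\mathbb T$ the unit circle, and $m$ planar Lebesgue measure. *)

theory Defs
  imports "HOL-Analysis.Analysis"
begin

end

theory Submission
  imports Defs
begin

text \<open>
  Cut the unit circle into consecutive arcs of lengths \<open>2 pi alpha_k / A\<close>, where \<open>A\<close> is the
  sum of the \<open>alpha_k\<close>, and put \<open>z_k\<close> at their midpoints. For \<open>|z| < 1\<close> the kernel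
  \<open>theta \<mapsto> 1 / (z - e^(i theta))\<close> has the \<open>2 pi\<close>-periodic primitive
  \<open>i Ln (1 - z e^(-i theta)) / z\<close>, so its integral over the circle vanishes, and the sum of the
  \<open>alpha_k / (z - z_k)\<close> is \<open>A / (2 pi)\<close> times the total error of the midpoint rule for
  that integral. On an arc of half-length \<open>h\<close> with midpoint \<open>c\<close> this error is
  \<open>O(h^3 / |z - c|^3)\<close> outside the disc of radius \<open>4 h\<close> about \<open>c\<close>: expanding the
  kernel to second order at \<open>c\<close>, the linear term integrates to \<open>O(h^3)\<close>. Inside that disc
  the error is bounded by the kernels themselves, which are integrable there (for the arc
  this uses Fubini). Both parts have planar \<open>L^1\<close> norm \<open>O(h^2)\<close>, and
  \<open>A / (2 pi)\<close> times the sum of the \<open>h_k^2\<close> is a constant times the sum of the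
  \<open>alpha_k^2\<close> divided by \<open>A\<close>.
\<close>

lemma emeasure_cball_complex:
  fixes c :: complex assumes "r \<ge> 0"
  shows "emeasure lborel (cball c r) = ennreal (pi * r^2)"
  using assms by (simp add: emeasure_cball unit_ball_vol_2)

lemma ball_in_sets_borel [measurable]: "ball c r \<in> sets borel"
  and cball_in_sets_borel [measurable]: "cball c r \<in> sets borel"
  by simp_all

lemma ex_power2_bracket:
  fixes x :: real assumes "x \<ge> 1"
  shows "\<exists>j::nat. 2^j \<le> x \<and> x < 2^Suc j"
proof -
  obtain n :: nat where "x < 2^n" using real_arch_pow[of 2 x] by auto
  define N where "N = (LEAST n::nat. x < 2^n)"
  have N: "x < 2^N" unfolding N_def by (rule LeastI) fact
  with assms obtain j where j: "N = Suc j" by (cases N) auto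
  have "\<not> x < 2^j" using not_less_Least[of j "\<lambda>n. x < 2^n"] j N_def by auto
  with N j show ?thesis by (intro exI[of _ j]) auto
qed

lemma suminf_ennreal_divide_power2:
  fixes a :: real assumes "a \<ge> 0"
  shows "(\<Sum>j. ennreal (a / 2^j)) = ennreal (2 * a)"
proof -
  have "(\<lambda>j. a * (1/2)^j) sums (a * (1 / (1 - 1/2)))"
    by (intro sums_mult geometric_sums) auto
  then have "(\<lambda>j. a / 2^j) sums (2 * a)" by (simp add: power_one_over mult.commute)
  then show ?thesis
    using assms by (simp add: suminf_ennreal2 sums_summable sums_unique[symmetric])
qed

lemma nn_integral_le_suminf_cballs:
  fixes c :: complex and f :: "complex \<Rightarrow> ennreal"
  assumes dom: "\<And>z. \<exists>j. f z \<le> ennreal (a j) * indicator (cball c (r j)) z"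
    and a: "\<And>j. a j \<ge> 0" and r: "\<And>j. r j \<ge> 0"
  shows "(\<integral>\<^sup>+z. f z \<partial>lborel) \<le> (\<Sum>j. ennreal (pi * a j * (r j)^2))"
proof -
  have "(\<integral>\<^sup>+z. f z \<partial>lborel) \<le> (\<integral>\<^sup>+z. (\<Sum>j. ennreal (a j) * indicator (cball c (r j)) z) \<partial>lborel)"
  proof (rule nn_integral_mono)
    have term_le_suminf: "g i \<le> suminf g" for g :: "nat \<Rightarrow> ennreal" and i
      using sum_le_suminf[of g "{i}"] by (simp add: summableI)
    fix z
    obtain j where "f z \<le> ennreal (a j) * indicator (cball c (r j)) z" using dom by blast
    also have "\<dots> \<le> (\<Sum>j. ennreal (a j) * indicator (cball c (r j)) z)"
      by (rule term_le_suminf)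
    finally show "f z \<le> (\<Sum>j. ennreal (a j) * indicator (cball c (r j)) z)" .
  qed
  also have "\<dots> = (\<Sum>j. \<integral>\<^sup>+z. ennreal (a j) * indicator (cball c (r j)) z \<partial>lborel)"
    by (rule nn_integral_suminf) measurable
  also have "\<dots> = (\<Sum>j. ennreal (a j) * emeasure lborel (cball c (r j)))"
    by (simp add: nn_integral_cmult_indicator)
  also have "\<dots> = (\<Sum>j. ennreal (pi * a j * (r j)^2))"
    using a r by (simp add: emeasure_cball_complex ennreal_mult'[symmetric] mult_ac)
  finally show ?thesis .
qed

lemma nn_integral_ball_inverse_norm:
  fixes c :: complex assumes r: "r > 0"
  shows "(\<integral>\<^sup>+z\<in>ball c r. ennreal (1 / norm (z - c)) \<partial>lborel) \<le> ennreal (4 * pi * r)"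
proof -
  have "(\<integral>\<^sup>+z\<in>ball c r. ennreal (1 / norm (z - c)) \<partial>lborel)
      \<le> (\<Sum>j. ennreal (pi * (2^Suc j / r) * (r / 2^j)^2))"
  proof (rule nn_integral_le_suminf_cballs)
    fix z :: complex
    show "\<exists>j. ennreal (1 / norm (z - c)) * indicator (ball c r) z
        \<le> ennreal (2^Suc j / r) * indicator (cball c (r / 2^j)) z"
    proof (cases "z \<in> ball c r \<and> z \<noteq> c")
      case True
      then have u: "0 < norm (z - c)" "norm (z - c) < r"
        by (auto simp: dist_norm norm_minus_commute)
      then obtain j where j: "2^j \<le> r / norm (z - c)" "r / norm (z - c) < 2^Suc j"
        using ex_power2_bracket[of "r / norm (z - c)"] by auto
      from j(1) u have "z \<in> cball c (r / 2^j)"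
        by (simp add: dist_norm norm_minus_commute field_simps)
      moreover from j(2) u r have "1 / norm (z - c) \<le> 2^Suc j / r"
        by (simp add: field_simps)
      ultimately show ?thesis
        using True by (intro exI[of _ j]) (auto intro: ennreal_leI)
    qed auto
  qed (use r in auto)
  also have "\<dots> = (\<Sum>j. ennreal (2 * pi * r / 2^j))"
    using r by (simp add: power2_eq_square field_simps)
  also have "\<dots> = ennreal (4 * pi * r)"
    using r by (subst suminf_ennreal_divide_power2) auto
  finally show ?thesis .
qed

lemma nn_integral_outside_ball_inverse_norm_cube:
  fixes c :: complex assumes \<rho>: "\<rho> > 0"
  shows "(\<integral>\<^sup>+z\<in>-ball c \<rho>. ennreal (1 / norm (z - c)^3) \<partial>lborel) \<le> ennreal (8 * pi / \<rho>)"
proof -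
  have "(\<integral>\<^sup>+z\<in>-ball c \<rho>. ennreal (1 / norm (z - c)^3) \<partial>lborel)
      \<le> (\<Sum>j. ennreal (pi * (1 / (\<rho> * 2^j)^3) * (\<rho> * 2^Suc j)^2))"
  proof (rule nn_integral_le_suminf_cballs)
    fix z :: complex
    show "\<exists>j. ennreal (1 / norm (z - c)^3) * indicator (-ball c \<rho>) z
        \<le> ennreal (1 / (\<rho> * 2^j)^3) * indicator (cball c (\<rho> * 2^Suc j)) z"
    proof (cases "z \<in> -ball c \<rho>")
      case True
      then have u: "\<rho> \<le> norm (z - c)" by (simp add: dist_norm norm_minus_commute)
      then obtain j where j: "2^j \<le> norm (z - c) / \<rho>" "norm (z - c) / \<rho> < 2^Suc j"
        using ex_power2_bracket[of "norm (z - c) / \<rho>"] \<rho> by auto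
      from j(2) \<rho> have "z \<in> cball c (\<rho> * 2^Suc j)"
        by (simp add: dist_norm norm_minus_commute field_simps)
      moreover have "1 / norm (z - c)^3 \<le> 1 / (\<rho> * 2^j)^3"
        using j(1) \<rho> by (intro frac_le power_mono) (auto simp: field_simps)
      ultimately show ?thesis
        using True by (intro exI[of _ j]) (auto intro: ennreal_leI)
    qed auto
  qed (use \<rho> in auto)
  also have "\<dots> = (\<Sum>j. ennreal (4 * pi / \<rho> / 2^j))"
    using \<rho> by (simp add: power2_eq_square power3_eq_cube field_simps)
  also have "\<dots> = ennreal (8 * pi / \<rho>)"
    using \<rho> by (subst suminf_ennreal_divide_power2) auto
  finally show ?thesis .
qed

lemma abs_sin_minus_self_le: "\<bar>sin x - x\<bar> \<le> \<bar>x\<bar>^3 / 6" for x :: real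
  using Maclaurin_sin_bound[of x 3] by (simp add: sin_coeff_def eval_nat_numeral fact_numeral)

lemma norm_cis_diff_le: "norm (cis a - cis b) \<le> \<bar>a - b\<bar>"
proof -
  define d where "d = (a - b) / 2"
  have "cis a - cis b = cis ((a+b)/2) * (cis d - cis (-d))"
    unfolding d_def right_diff_distrib cis_mult by (simp add: field_simps)
  also have "cis d - cis (-d) = 2 * \<i> * sin d"
    by (simp add: complex_eq_iff)
  finally have "norm (cis a - cis b) = 2 * \<bar>sin d\<bar>"
    by (simp add: norm_mult)
  also have "\<dots> \<le> \<bar>a - b\<bar>" using abs_sin_x_le_abs_x[of d] by (simp add: d_def)
  finally show ?thesis .
qed

lemma has_vector_derivative_cis: "(cis has_vector_derivative \<i> * cis t) (at t within S)"
proof -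
  have "(cis has_vector_derivative \<i> * cis t) (at t)"
    using has_derivative_cis[OF has_derivative_ident, of t UNIV]
    by (simp add: has_vector_derivative_def mult_ac)
  then show ?thesis by (rule has_vector_derivative_at_within)
qed

lemma has_integral_cis_diff:
  assumes "h \<ge> 0"
  shows "((\<lambda>\<theta>. cis \<theta> - cis m) has_integral cis m * of_real (2 * (sin h - h))) {m-h..m+h}"
proof -
  define F where "F \<theta> = - \<i> * cis \<theta> - of_real \<theta> * cis m" for \<theta>
  have "(F has_vector_derivative cis \<theta> - cis m) (at \<theta> within {m-h..m+h})" for \<theta>
    unfolding F_def
    by (auto intro!: derivative_eq_intros has_vector_derivative_cis
        has_vector_derivative_of_real[OF DERIV_ident, simplified])
  then have "((\<lambda>\<theta>. cis \<theta> - cis m) has_integral F (m+h) - F (m-h)) {m-h..m+h}"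
    using assms by (intro fundamental_theorem_of_calculus) auto
  moreover have "F (m+h) - F (m-h) = cis m * of_real (2 * (sin h - h))"
    by (simp add: F_def complex_eq_iff cos_add cos_diff sin_add sin_diff algebra_simps)
  ultimately show ?thesis by simp
qed

lemma norm_integral_cis_diff_le:
  assumes h: "h \<ge> 0"
  shows "norm (integral {m-h..m+h} (\<lambda>\<theta>. cis \<theta> - cis m)) \<le> h^3 / 3"
proof -
  have "norm (integral {m-h..m+h} (\<lambda>\<theta>. cis \<theta> - cis m)) = 2 * \<bar>sin h - h\<bar>"
    unfolding integral_unique[OF has_integral_cis_diff[OF h]] norm_mult norm_cis norm_of_real abs_mult
    by simp
  also have "\<dots> \<le> h^3 / 3"
    using abs_sin_minus_self_le[of h] h by simp
  finally show ?thesis .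
qed

lemma cis_neq_of_norm_less: "norm z < 1 \<Longrightarrow> z \<noteq> cis t"
  by auto

definition cauchy_primitive :: "complex \<Rightarrow> real \<Rightarrow> complex" where
  "cauchy_primitive z \<theta> = \<i> * Ln (1 - z * cis (-\<theta>)) / z"

lemma has_vector_derivative_cauchy_primitive:
  assumes z: "norm z < 1" "z \<noteq> 0"
  shows "(cauchy_primitive z has_vector_derivative 1 / (z - cis t)) (at t within S)"
proof -
  define e where "e = exp (- (\<i> * of_real t))"
  have "Re (z * cis (-t)) \<le> norm (z * cis (-t))" by (rule complex_Re_le_cmod)
  also have "\<dots> < 1" using z by (simp add: norm_mult)
  finally have "1 - z * e \<notin> \<real>\<^sub>\<le>\<^sub>0"
    by (auto simp: complex_nonpos_Reals_iff cis_conv_exp e_def)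
  then have "((\<lambda>w. \<i> * Ln (1 - z * exp (- (\<i> * w))) / z) has_field_derivative - e / (1 - z * e))
      (at (of_real t))"
    using z unfolding e_def by (auto intro!: derivative_eq_intros simp: divide_inverse ac_simps)
  also have "- e / (1 - z * e) = 1 / (z - cis t)"
  proof -
    have "cis t * e = 1" by (simp add: e_def cis_conv_exp flip: exp_add)
    then have "1 - z * e = (cis t - z) * e" by (simp add: algebra_simps)
    moreover have "e \<noteq> 0" by (simp add: e_def)
    ultimately show ?thesis using cis_neq_of_norm_less[OF z(1), of t]
      by (simp add: divide_simps)
  qed
  finally have "((\<lambda>\<theta>. \<i> * Ln (1 - z * exp (- (\<i> * of_real \<theta>))) / z) has_vector_derivative
      1 / (z - cis t)) (at t within S)"
    by (rule has_vector_derivative_real_field)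
  moreover have "cauchy_primitive z = (\<lambda>\<theta>. \<i> * Ln (1 - z * exp (- (\<i> * of_real \<theta>))) / z)"
    by (simp add: fun_eq_iff cauchy_primitive_def cis_conv_exp)
  ultimately show ?thesis by simp
qed

lemma integral_cauchy_kernel:
  assumes "norm z < 1" "z \<noteq> 0" "a \<le> b"
  shows "integral {a..b} (\<lambda>\<theta>. 1 / (z - cis \<theta>)) = cauchy_primitive z b - cauchy_primitive z a"
  using assms by (intro integral_unique fundamental_theorem_of_calculus has_vector_derivative_cauchy_primitive)

lemma cauchy_primitive_2pi: "cauchy_primitive z (2*pi) = cauchy_primitive z 0"
proof -
  have "cis (-(2*pi)) = 1" by (simp add: complex_eq_iff)
  then show ?thesis by (simp add: cauchy_primitive_def)
qed

lemma continuous_on_cauchy_kernel: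
  "norm z < 1 \<Longrightarrow> continuous_on S (\<lambda>\<theta>. 1 / (z - cis \<theta>))"
  by (intro continuous_intros) (auto dest: cis_neq_of_norm_less)

definition midpoint_error :: "complex \<Rightarrow> real \<Rightarrow> real \<Rightarrow> complex" where
  "midpoint_error z m h = of_real (2*h) / (z - cis m) - integral {m-h..m+h} (\<lambda>\<theta>. 1 / (z - cis \<theta>))"

lemma norm_midpoint_error_le_near:
  assumes z: "norm z < 1" and h: "h \<ge> 0"
  shows "ennreal (norm (midpoint_error z m h)) \<le>
    ennreal (2*h / norm (z - cis m)) + (\<integral>\<^sup>+\<theta>\<in>{m-h..m+h}. ennreal (1 / norm (z - cis \<theta>)) \<partial>lborel)"
proof -
  let ?I = "integral {m-h..m+h} (\<lambda>\<theta>. 1 / norm (z - cis \<theta>))"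
  have int: "(\<lambda>\<theta>. 1 / norm (z - cis \<theta>)) integrable_on {m-h..m+h}"
    using continuous_on_norm[OF continuous_on_cauchy_kernel[OF z]]
    by (intro integrable_continuous_interval) (simp add: norm_divide)
  have "norm (midpoint_error z m h)
      \<le> 2*h / norm (z - cis m) + norm (integral {m-h..m+h} (\<lambda>\<theta>. 1 / (z - cis \<theta>)))"
    unfolding midpoint_error_def
    using norm_triangle_ineq4[of "of_real (2*h) / (z - cis m)"] h by (simp add: norm_divide)
  also have "norm (integral {m-h..m+h} (\<lambda>\<theta>. 1 / (z - cis \<theta>))) \<le> ?I"
    by (rule integral_norm_bound_integral[OF
          integrable_continuous_interval[OF continuous_on_cauchy_kernel[OF z]] int])
      (simp add: norm_divide)
  finally have "ennreal (norm (midpoint_error z m h)) \<le> ennreal (2*h / norm (z - cis m)) + ennreal ?I"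
    using h integral_nonneg[OF int] by (simp add: ennreal_leI flip: ennreal_plus)
  also have "ennreal ?I = (\<integral>\<^sup>+\<theta>\<in>{m-h..m+h}. ennreal (1 / norm (z - cis \<theta>)) \<partial>lborel)"
    using int by (intro nn_integral_has_integral_lebesgue'[symmetric]) auto
  finally show ?thesis .
qed

lemma norm_inverse_taylor_remainder_le:
  fixes z c w :: complex
  assumes "z \<noteq> c" and wc: "norm (w - c) \<le> h" and far: "4*h \<le> norm (z - c)"
  shows "norm (1 / (z - w) - 1 / (z - c) - (w - c) / (z - c)^2) \<le> 4/3 * h^2 / norm (z - c)^3"
proof -
  define u where "u = z - c"
  define d where "d = w - c"
  have "u \<noteq> 0" using assms by (simp add: u_def)
  have "norm u - h \<le> norm (u - d)" using norm_triangle_ineq2[of u d] wc by (simp add: d_def)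
  then have ud: "3/4 * norm u \<le> norm (u - d)" using far by (simp add: u_def)
  then have "u - d \<noteq> 0" using \<open>u \<noteq> 0\<close> by auto
  have "1 / (z - w) - 1 / (z - c) - (w - c) / (z - c)^2 = 1 / (u - d) - 1 / u - d / u^2"
    by (simp add: u_def d_def)
  also have "\<dots> = d^2 / (u^2 * (u - d))"
    using \<open>u \<noteq> 0\<close> \<open>u - d \<noteq> 0\<close> by (simp add: field_simps power2_eq_square)
  finally have "norm (1 / (z - w) - 1 / (z - c) - (w - c) / (z - c)^2) = (norm d)^2 / ((norm u)^2 * norm (u - d))"
    by (simp add: norm_divide norm_mult norm_power)
  also have "\<dots> \<le> h^2 / ((norm u)^2 * (3/4 * norm u))"
    using wc ud \<open>u \<noteq> 0\<close> by (intro frac_le mult_left_mono power_mono) (auto simp: d_def)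
  also have "\<dots> = 4/3 * h^2 / norm (z - c)^3"
    by (simp add: u_def power2_eq_square power3_eq_cube)
  finally show ?thesis .
qed

lemma norm_midpoint_error_le_far:
  assumes z: "norm z < 1" and h: "h \<ge> 0" and far: "4*h \<le> norm (z - cis m)"
  shows "norm (midpoint_error z m h) \<le> 4 * h^3 / norm (z - cis m)^3"
proof -
  define u where "u = z - cis m"
  define U where "U = norm u"
  have "u \<noteq> 0" using cis_neq_of_norm_less[OF z] by (simp add: u_def)
  then have U: "U > 0" by (simp add: U_def)
  have U2: "U \<le> 2" using norm_triangle_ineq4[of z "cis m"] z by (simp add: U_def u_def)
  define K where "K = integral {m-h..m+h} (\<lambda>\<theta>. 1 / (z - cis \<theta>))"
  define D where "D = integral {m-h..m+h} (\<lambda>\<theta>. cis \<theta> - cis m)"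
  have kernel: "((\<lambda>\<theta>. 1 / (z - cis \<theta>)) has_integral K) {m-h..m+h}"
    unfolding K_def
    by (intro integrable_integral integrable_continuous_interval continuous_on_cauchy_kernel z)
  have const: "((\<lambda>\<theta>. 1 / u) has_integral of_real (2*h) / u) {m-h..m+h}"
    using has_integral_const_real[of "1/u" "m-h" "m+h"] h by (simp add: scaleR_conv_of_real)
  have dipole: "((\<lambda>\<theta>. cis \<theta> - cis m) has_integral D) {m-h..m+h}"
    unfolding D_def integral_unique[OF has_integral_cis_diff[OF h]] by (rule has_integral_cis_diff[OF h])
  have "((\<lambda>\<theta>. 1 / (z - cis \<theta>) - 1 / u - (cis \<theta> - cis m) / u^2)
      has_integral K - of_real (2*h) / u - D / u^2) {m-h..m+h}"
    by (intro has_integral_diff kernel const has_integral_divide dipole)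
  moreover have "norm (1 / (z - cis \<theta>) - 1 / u - (cis \<theta> - cis m) / u^2) \<le> 4/3 * h^2 / U^3"
    if "\<theta> \<in> {m-h..m+h}" for \<theta>
    unfolding U_def u_def
  proof (rule norm_inverse_taylor_remainder_le[OF cis_neq_of_norm_less[OF z] _ far])
    show "norm (cis \<theta> - cis m) \<le> h" using norm_cis_diff_le[of \<theta> m] that by auto
  qed
  ultimately have "norm (K - of_real (2*h) / u - D / u^2) \<le> 4/3 * h^2 / U^3 * (2*h)"
    using has_integral_bound[of "4/3 * h^2 / U^3" _ _ "m-h" "m+h"] U h by auto
  also have "\<dots> = 8/3 * h^3 / U^3"
    by (simp add: power2_eq_square power3_eq_cube)
  finally have remainder: "norm (K - of_real (2*h) / u - D / u^2) \<le> 8/3 * h^3 / U^3" .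
  have "norm D * U \<le> h^3 / 3 * 2"
    using norm_integral_cis_diff_le[OF h, of m] U U2 h by (intro mult_mono) (auto simp: D_def)
  then have linear_term: "norm D / U^2 \<le> 2/3 * h^3 / U^3"
    using U by (simp add: field_simps power2_eq_square power3_eq_cube)
  have "norm (midpoint_error z m h) = norm ((K - of_real (2*h) / u - D / u^2) + D / u^2)"
    by (simp add: midpoint_error_def K_def u_def norm_minus_commute)
  also have "\<dots> \<le> norm (K - of_real (2*h) / u - D / u^2) + norm (D / u^2)"
    by (rule norm_triangle_ineq)
  also have "\<dots> = norm (K - of_real (2*h) / u - D / u^2) + norm D / U^2"
    by (simp add: U_def norm_divide norm_power)
  also have "\<dots> \<le> 8/3 * h^3 / U^3 + 2/3 * h^3 / U^3"
    using remainder linear_term by (rule add_mono)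
  also have "\<dots> \<le> 4 * h^3 / U^3"
    using U h by (simp add: field_simps)
  finally show ?thesis by (simp add: U_def u_def)
qed

lemma borel_measurable_cis [measurable]: "cis \<in> borel_measurable borel"
  by (intro borel_measurable_continuous_onI continuous_on_cis continuous_on_id)

definition midpoint_error_majorant :: "real \<Rightarrow> real \<Rightarrow> complex \<Rightarrow> ennreal" where
  "midpoint_error_majorant m h z =
     ennreal (2*h / norm (z - cis m)) * indicator (ball (cis m) (4*h)) z
   + (\<integral>\<^sup>+\<theta>\<in>{m-h..m+h}. ennreal (1 / norm (z - cis \<theta>)) \<partial>lborel) * indicator (ball (cis m) (4*h)) z
   + ennreal (4 * h^3 / norm (z - cis m)^3) * indicator (- ball (cis m) (4*h)) z"

lemma borel_measurable_arc_potential [measurable]: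
  "(\<lambda>z. \<integral>\<^sup>+\<theta>\<in>{a..b}. ennreal (1 / norm (z - cis \<theta>)) \<partial>lborel) \<in> borel_measurable lborel"
  by measurable

lemma borel_measurable_midpoint_error_majorant [measurable]:
  "midpoint_error_majorant m h \<in> borel_measurable lborel"
  unfolding midpoint_error_majorant_def[abs_def] by measurable

lemma norm_midpoint_error_le_majorant:
  assumes "norm z < 1" "h \<ge> 0"
  shows "ennreal (norm (midpoint_error z m h)) \<le> midpoint_error_majorant m h z"
proof (cases "z \<in> ball (cis m) (4*h)")
  case True
  then show ?thesis
    using norm_midpoint_error_le_near[OF assms] by (simp add: midpoint_error_majorant_def)
next
  case False
  then have "4*h \<le> norm (z - cis m)" by (simp add: dist_norm norm_minus_commute)
  then show ?thesis
    using False norm_midpoint_error_le_far[OF assms] by (simp add: midpoint_error_majorant_def ennreal_leI)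
qed

lemma nn_integral_arc_potential_le:
  assumes h: "h > 0"
  shows "(\<integral>\<^sup>+z\<in>ball (cis m) (4*h).
      (\<integral>\<^sup>+\<theta>\<in>{m-h..m+h}. ennreal (1 / norm (z - cis \<theta>)) \<partial>lborel) \<partial>lborel)
    \<le> ennreal (40 * pi * h^2)"
proof -
  have "(\<integral>\<^sup>+z\<in>ball (cis m) (4*h).
        (\<integral>\<^sup>+\<theta>\<in>{m-h..m+h}. ennreal (1 / norm (z - cis \<theta>)) \<partial>lborel) \<partial>lborel)
      = (\<integral>\<^sup>+z. \<integral>\<^sup>+\<theta>. ennreal (1 / norm (z - cis \<theta>)) * indicator {m-h..m+h} \<theta>
            * indicator (ball (cis m) (4*h)) z \<partial>lborel \<partial>lborel)"
    by (subst nn_integral_multc) auto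
  also have "\<dots> = (\<integral>\<^sup>+\<theta>\<in>{m-h..m+h}.
      (\<integral>\<^sup>+z\<in>ball (cis m) (4*h). ennreal (1 / norm (z - cis \<theta>)) \<partial>lborel) \<partial>lborel)"
    by (subst lborel_pair.Fubini') (auto intro!: nn_integral_cong split: split_indicator)
  also have "\<dots> \<le> (\<integral>\<^sup>+\<theta>\<in>{m-h..m+h}. ennreal (20 * pi * h) \<partial>lborel)"
  proof (rule nn_integral_mono)
    fix \<theta> :: real
    show "(\<integral>\<^sup>+z\<in>ball (cis m) (4*h). ennreal (1 / norm (z - cis \<theta>)) \<partial>lborel) * indicator {m-h..m+h} \<theta>
        \<le> ennreal (20 * pi * h) * indicator {m-h..m+h} \<theta>"
    proof (cases "\<theta> \<in> {m-h..m+h}")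
      case True
      then have "dist (cis \<theta>) (cis m) \<le> h"
        using norm_cis_diff_le[of \<theta> m] by (auto simp: dist_norm)
      then have "ball (cis m) (4*h) \<subseteq> ball (cis \<theta>) (5*h)"
        by (subst ball_subset_ball_iff) (simp add: dist_commute)
      then have "(\<integral>\<^sup>+z\<in>ball (cis m) (4*h). ennreal (1 / norm (z - cis \<theta>)) \<partial>lborel)
          \<le> (\<integral>\<^sup>+z\<in>ball (cis \<theta>) (5*h). ennreal (1 / norm (z - cis \<theta>)) \<partial>lborel)"
        by (intro nn_integral_mono) (auto split: split_indicator)
      also have "\<dots> \<le> ennreal (4 * pi * (5*h))"
        using h by (intro nn_integral_ball_inverse_norm) auto
      finally show ?thesis using True by (simp add: mult_ac)
    qed simp
  qed
  also have "\<dots> = ennreal (40 * pi * h^2)"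
    using h by (simp add: nn_integral_cmult_indicator ennreal_mult[symmetric] power2_eq_square)
  finally show ?thesis .
qed

lemma nn_integral_midpoint_error_majorant:
  "(\<integral>\<^sup>+z. midpoint_error_majorant m h z \<partial>lborel)
    = (\<integral>\<^sup>+z\<in>ball (cis m) (4*h). ennreal (2*h / norm (z - cis m)) \<partial>lborel)
    + (\<integral>\<^sup>+z\<in>ball (cis m) (4*h).
        (\<integral>\<^sup>+\<theta>\<in>{m-h..m+h}. ennreal (1 / norm (z - cis \<theta>)) \<partial>lborel) \<partial>lborel)
    + (\<integral>\<^sup>+z\<in>-ball (cis m) (4*h). ennreal (4 * h^3 / norm (z - cis m)^3) \<partial>lborel)"
proof -
  let ?B = "ball (cis m) (4*h)"
  have m1: "(\<lambda>z. ennreal (2*h / norm (z - cis m)) * indicator ?B z) \<in> borel_measurable lborel"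
    by measurable
  have m2: "(\<lambda>z. (\<integral>\<^sup>+\<theta>\<in>{m-h..m+h}. ennreal (1 / norm (z - cis \<theta>)) \<partial>lborel) * indicator ?B z)
      \<in> borel_measurable lborel"
    by measurable
  have m3: "(\<lambda>z. ennreal (4 * h^3 / norm (z - cis m)^3) * indicator (-?B) z) \<in> borel_measurable lborel"
    by measurable
  show ?thesis
    unfolding midpoint_error_majorant_def
    by (simp only: nn_integral_add[OF borel_measurable_add[OF m1 m2] m3] nn_integral_add[OF m1 m2])
qed

lemma nn_integral_midpoint_error_majorant_le:
  assumes h: "h > 0"
  shows "(\<integral>\<^sup>+z. midpoint_error_majorant m h z \<partial>lborel) \<le> ennreal (80 * pi * h^2)"
proof -
  let ?B = "ball (cis m) (4*h)"
  have near: "(\<integral>\<^sup>+z\<in>?B. ennreal (2*h / norm (z - cis m)) \<partial>lborel) \<le> ennreal (32 * pi * h^2)"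
  proof -
    have "ennreal (2*h / norm (z - cis m)) = ennreal (2*h) * ennreal (1 / norm (z - cis m))" for z
      by (subst ennreal_mult'[symmetric]) (use h in auto)
    then have "(\<integral>\<^sup>+z\<in>?B. ennreal (2*h / norm (z - cis m)) \<partial>lborel)
        = (\<integral>\<^sup>+z. ennreal (2*h) * (ennreal (1 / norm (z - cis m)) * indicator ?B z) \<partial>lborel)"
      by (simp only: mult.assoc)
    also have "\<dots> = ennreal (2*h) * (\<integral>\<^sup>+z\<in>?B. ennreal (1 / norm (z - cis m)) \<partial>lborel)"
      by (rule nn_integral_cmult) measurable
    also have "\<dots> \<le> ennreal (2*h) * ennreal (4 * pi * (4*h))"
      using h by (intro mult_left_mono nn_integral_ball_inverse_norm) auto
    finally show ?thesis
      using h by (simp add: ennreal_mult'[symmetric] power2_eq_square mult_ac)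
  qed
  have far: "(\<integral>\<^sup>+z\<in>-?B. ennreal (4 * h^3 / norm (z - cis m)^3) \<partial>lborel) \<le> ennreal (8 * pi * h^2)"
  proof -
    have "ennreal (4 * h^3 / norm (z - cis m)^3) = ennreal (4 * h^3) * ennreal (1 / norm (z - cis m)^3)" for z
      by (subst ennreal_mult'[symmetric]) (use h in auto)
    then have "(\<integral>\<^sup>+z\<in>-?B. ennreal (4 * h^3 / norm (z - cis m)^3) \<partial>lborel)
        = (\<integral>\<^sup>+z. ennreal (4 * h^3) * (ennreal (1 / norm (z - cis m)^3) * indicator (-?B) z) \<partial>lborel)"
      by (simp only: mult.assoc)
    also have "\<dots> = ennreal (4 * h^3) * (\<integral>\<^sup>+z\<in>-?B. ennreal (1 / norm (z - cis m)^3) \<partial>lborel)"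
      by (rule nn_integral_cmult) measurable
    also have "\<dots> \<le> ennreal (4 * h^3) * ennreal (8 * pi / (4*h))"
      using h by (intro mult_left_mono nn_integral_outside_ball_inverse_norm_cube) auto
    finally show ?thesis
      using h by (simp add: ennreal_mult'[symmetric] power2_eq_square power3_eq_cube mult_ac)
  qed
  have "(\<integral>\<^sup>+z. midpoint_error_majorant m h z \<partial>lborel)
      \<le> ennreal (32 * pi * h^2) + ennreal (40 * pi * h^2) + ennreal (8 * pi * h^2)"
    unfolding nn_integral_midpoint_error_majorant
    using h by (intro add_mono near far nn_integral_arc_potential_le)
  also have "\<dots> = ennreal (80 * pi * h^2)"
    by (simp flip: ennreal_plus)
  finally show ?thesis .
qed

lemma sum_integrals_cauchy_kernel_partition:
  fixes t :: "nat \<Rightarrow> real"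
  assumes z: "norm z < 1" "z \<noteq> 0"
    and t: "t 0 = 0" "t n = 2*pi" "\<And>k. k \<in> {1..n} \<Longrightarrow> t (k-1) \<le> t k"
  shows "(\<Sum>k=1..n. integral {t (k-1)..t k} (\<lambda>\<theta>. 1 / (z - cis \<theta>))) = 0"
proof -
  have "(\<Sum>k=1..n. integral {t (k-1)..t k} (\<lambda>\<theta>. 1 / (z - cis \<theta>)))
      = (\<Sum>k=1..n. cauchy_primitive z (t k) - cauchy_primitive z (t (k-1)))"
    using t(3) z by (intro sum.cong refl integral_cauchy_kernel) auto
  also have "\<dots> = cauchy_primitive z (t n) - cauchy_primitive z (t 0)"
    using sum_telescope''[where m=0 and n=n and f="\<lambda>k. cauchy_primitive z (t k)"] by simp
  also have "\<dots> = 0"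
    using t cauchy_primitive_2pi by simp
  finally show ?thesis .
qed

lemma midpoint_riemann_term_eq:
  "of_real (b - a) / (z - cis ((a+b)/2))
    = midpoint_error z ((a+b)/2) ((b-a)/2) + integral {a..b} (\<lambda>\<theta>. 1 / (z - cis \<theta>))"
proof -
  have e: "(a+b)/2 - (b-a)/2 = a" "(a+b)/2 + (b-a)/2 = b" "2 * ((b-a)/2) = b - a"
    by (simp_all add: field_simps)
  show ?thesis
    unfolding midpoint_error_def e by simp
qed

lemma norm_midpoint_riemann_sum_le:
  fixes t :: "nat \<Rightarrow> real"
  assumes z: "norm z < 1" "z \<noteq> 0"
    and t: "t 0 = 0" "t n = 2*pi" "\<And>k. k \<in> {1..n} \<Longrightarrow> t (k-1) \<le> t k"
  shows "norm (\<Sum>k=1..n. of_real (t k - t (k-1)) / (z - cis ((t (k-1) + t k) / 2)))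
    \<le> (\<Sum>k=1..n. norm (midpoint_error z ((t (k-1) + t k) / 2) ((t k - t (k-1)) / 2)))"
proof -
  have "(\<Sum>k=1..n. of_real (t k - t (k-1)) / (z - cis ((t (k-1) + t k) / 2)))
      = (\<Sum>k=1..n. midpoint_error z ((t (k-1) + t k) / 2) ((t k - t (k-1)) / 2)
          + integral {t (k-1)..t k} (\<lambda>\<theta>. 1 / (z - cis \<theta>)))"
    by (intro sum.cong refl midpoint_riemann_term_eq)
  also have "\<dots> = (\<Sum>k=1..n. midpoint_error z ((t (k-1) + t k) / 2) ((t k - t (k-1)) / 2))"
    using sum_integrals_cauchy_kernel_partition[OF z t] by (simp add: sum.distrib)
  finally show ?thesis
    by (simp only: norm_sum)
qed

lemma nn_integral_midpoint_riemann_sum_le: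
  fixes t :: "nat \<Rightarrow> real"
  assumes t: "t 0 = 0" "t n = 2*pi" "\<And>k. k \<in> {1..n} \<Longrightarrow> t (k-1) < t k"
  shows "(\<integral>\<^sup>+z\<in>ball 0 1.
      ennreal (norm (\<Sum>k=1..n. of_real (t k - t (k-1)) / (z - cis ((t (k-1) + t k) / 2)))) \<partial>lborel)
    \<le> ennreal (20 * pi * (\<Sum>k=1..n. (t k - t (k-1))^2))"
proof -
  define m where "m k = (t (k-1) + t k) / 2" for k
  define h where "h k = (t k - t (k-1)) / 2" for k
  have h: "h k > 0" if "k \<in> {1..n}" for k using t(3)[OF that] by (simp add: h_def)
  have "ennreal (norm (\<Sum>k=1..n. of_real (t k - t (k-1)) / (z - cis (m k)))) * indicator (ball 0 1) z
      \<le> (\<Sum>k=1..n. midpoint_error_majorant (m k) (h k) z)" if "z \<noteq> 0" for z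
  proof (cases "z \<in> ball 0 1")
    case True
    then have "norm z < 1" by simp
    with \<open>z \<noteq> 0\<close> have "ennreal (norm (\<Sum>k=1..n. of_real (t k - t (k-1)) / (z - cis (m k))))
        \<le> ennreal (\<Sum>k=1..n. norm (midpoint_error z (m k) (h k)))"
      unfolding m_def h_def
      by (intro ennreal_leI norm_midpoint_riemann_sum_le) (use t in \<open>auto intro: less_imp_le\<close>)
    also have "\<dots> = (\<Sum>k=1..n. ennreal (norm (midpoint_error z (m k) (h k))))"
      by (simp add: sum_ennreal)
    also have "\<dots> \<le> (\<Sum>k=1..n. midpoint_error_majorant (m k) (h k) z)"
      using \<open>norm z < 1\<close> h by (intro sum_mono norm_midpoint_error_le_majorant) (auto intro: less_imp_le)
    finally show ?thesis using True by simp
  qed simp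
  then have "(\<integral>\<^sup>+z\<in>ball 0 1. ennreal (norm (\<Sum>k=1..n. of_real (t k - t (k-1)) / (z - cis (m k)))) \<partial>lborel)
      \<le> (\<integral>\<^sup>+z. (\<Sum>k=1..n. midpoint_error_majorant (m k) (h k) z) \<partial>lborel)"
    by (intro nn_integral_mono_AE) (use AE_lborel_singleton[of 0] in \<open>auto elim!: AE_mp\<close>)
  also have "\<dots> = (\<Sum>k=1..n. \<integral>\<^sup>+z. midpoint_error_majorant (m k) (h k) z \<partial>lborel)"
    by (rule nn_integral_sum) measurable
  also have "\<dots> \<le> (\<Sum>k=1..n. ennreal (80 * pi * (h k)^2))"
    using h by (intro sum_mono nn_integral_midpoint_error_majorant_le)
  also have "\<dots> = ennreal (\<Sum>k=1..n. 80 * pi * (h k)^2)"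
    by (rule sum_ennreal) simp
  also have "(\<Sum>k=1..n. 80 * pi * (h k)^2) = 20 * pi * (\<Sum>k=1..n. (t k - t (k-1))^2)"
    unfolding sum_distrib_left h_def by (intro sum.cong refl) (simp add: field_simps)
  finally show ?thesis by (simp add: m_def)
qed

lemma cumulative_partition:
  fixes \<alpha> t :: "nat \<Rightarrow> real"
  assumes pos: "\<forall>k\<in>{1..n}. \<alpha> k > 0" and "n > 0"
  defines "t k \<equiv> 2 * pi / (\<Sum>j=1..n. \<alpha> j) * (\<Sum>j=1..k. \<alpha> j)"
  shows "t 0 = 0" and "t n = 2 * pi"
    and step: "\<And>k. k \<in> {1..n} \<Longrightarrow> t k - t (k-1) = 2 * pi / (\<Sum>j=1..n. \<alpha> j) * \<alpha> k"
    and "\<And>k. k \<in> {1..n} \<Longrightarrow> t (k-1) < t k"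
proof -
  define A where "A = (\<Sum>j=1..n. \<alpha> j)"
  have A: "A > 0" unfolding A_def using pos \<open>n > 0\<close> by (intro sum_pos) auto
  have t: "t k = 2 * pi / A * (\<Sum>j=1..k. \<alpha> j)" for k
    by (simp add: t_def A_def)
  show "t 0 = 0" by (simp add: t)
  show "t n = 2 * pi" using A unfolding t A_def by simp
  show step: "t k - t (k-1) = 2 * pi / (\<Sum>j=1..n. \<alpha> j) * \<alpha> k" if "k \<in> {1..n}" for k
    using that by (cases k) (auto simp: t_def sum.cl_ivl_Suc algebra_simps add_divide_distrib)
  show "t (k-1) < t k" if "k \<in> {1..n}" for k
  proof -
    have "0 < 2 * pi / A * \<alpha> k" using pos that A by simp
    then show ?thesis using step[OF that] by (simp add: A_def)
  qed
qed

lemma nn_integral_weighted_cauchy_sum_le: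
  fixes \<alpha> t :: "nat \<Rightarrow> real"
  assumes pos: "\<forall>k\<in>{1..n}. \<alpha> k > 0" and "n > 0"
  defines "t k \<equiv> 2 * pi / (\<Sum>j=1..n. \<alpha> j) * (\<Sum>j=1..k. \<alpha> j)"
  shows "(\<integral>\<^sup>+z\<in>ball 0 1.
      ennreal (norm (\<Sum>k=1..n. complex_of_real (\<alpha> k) / (z - cis ((t (k-1) + t k) / 2)))) \<partial>lborel)
    \<le> ennreal (40 * pi^2 * (\<Sum>k=1..n. (\<alpha> k)\<^sup>2) / (\<Sum>k=1..n. \<alpha> k))"
proof -
  note partition = cumulative_partition[OF pos \<open>n > 0\<close>, folded t_def]
  define A where "A = (\<Sum>k=1..n. \<alpha> k)"
  have A: "A > 0" unfolding A_def using pos \<open>n > 0\<close> by (intro sum_pos) auto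
  define \<kappa> where "\<kappa> = A / (2*pi)"
  have \<kappa>: "\<kappa> > 0" using A by (simp add: \<kappa>_def)
  have weight: "\<alpha> k = \<kappa> * (t k - t (k-1))" if "k \<in> {1..n}" for k
    using A partition(3)[OF that] by (simp add: \<kappa>_def A_def)
  have "(\<Sum>k=1..n. complex_of_real (\<alpha> k) / (z - cis ((t (k-1) + t k) / 2)))
      = of_real \<kappa> * (\<Sum>k=1..n. of_real (t k - t (k-1)) / (z - cis ((t (k-1) + t k) / 2)))" for z
    unfolding sum_distrib_left by (intro sum.cong refl) (simp add: weight)
  then have "(\<integral>\<^sup>+z\<in>ball 0 1.
      ennreal (norm (\<Sum>k=1..n. complex_of_real (\<alpha> k) / (z - cis ((t (k-1) + t k) / 2)))) \<partial>lborel)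
    = ennreal \<kappa> * (\<integral>\<^sup>+z\<in>ball 0 1.
      ennreal (norm (\<Sum>k=1..n. of_real (t k - t (k-1)) / (z - cis ((t (k-1) + t k) / 2)))) \<partial>lborel)"
    using \<kappa> by (subst nn_integral_cmult[symmetric]) (auto simp: norm_mult ennreal_mult mult.assoc)
  also have "\<dots> \<le> ennreal \<kappa> * ennreal (20 * pi * (\<Sum>k=1..n. (t k - t (k-1))^2))"
    using partition by (intro mult_left_mono nn_integral_midpoint_riemann_sum_le) auto
  also have "(\<Sum>k=1..n. (t k - t (k-1))^2) = (2*pi / A)^2 * (\<Sum>k=1..n. (\<alpha> k)\<^sup>2)"
    unfolding sum_distrib_left A_def by (intro sum.cong refl) (simp only: partition(3) power_mult_distrib)
  also have "ennreal \<kappa> * ennreal (20 * pi * ((2*pi / A)^2 * (\<Sum>k=1..n. (\<alpha> k)\<^sup>2)))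
      = ennreal (\<kappa> * (20 * pi * ((2*pi / A)^2 * (\<Sum>k=1..n. (\<alpha> k)\<^sup>2))))"
    using \<kappa> by (simp add: ennreal_mult')
  also have "\<kappa> * (20 * pi * ((2*pi / A)^2 * (\<Sum>k=1..n. (\<alpha> k)\<^sup>2))) = 40 * pi^2 * (\<Sum>k=1..n. (\<alpha> k)\<^sup>2) / A"
    using A by (simp add: \<kappa>_def power2_eq_square field_simps)
  finally show ?thesis by (simp add: A_def)
qed

theorem theorem1p3:
  shows "\<exists>C::real. C > 0 \<and>
    (\<forall>(n::nat) (\<alpha>::nat \<Rightarrow> real). (\<forall>k\<in>{1..n}. \<alpha> k > 0) \<longrightarrow>
      (\<exists>zs::nat \<Rightarrow> complex. (\<forall>k\<in>{1..n}. norm (zs k) = 1) \<and>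
         (\<integral>\<^sup>+ z \<in> ball 0 1. ennreal (norm (\<Sum>k=1..n. complex_of_real (\<alpha> k) / (z - zs k))) \<partial>lborel)
           \<le> ennreal (C * (\<Sum>k=1..n. (\<alpha> k)\<^sup>2) / (\<Sum>k=1..n. \<alpha> k))))"
proof (intro exI[of _ "40 * pi^2"] conjI allI impI)
  fix n :: nat and \<alpha> :: "nat \<Rightarrow> real"
  assume pos: "\<forall>k\<in>{1..n}. \<alpha> k > 0"
  define t where "t k = 2 * pi / (\<Sum>j=1..n. \<alpha> j) * (\<Sum>j=1..k. \<alpha> j)" for k
  show "\<exists>zs::nat \<Rightarrow> complex. (\<forall>k\<in>{1..n}. norm (zs k) = 1) \<and>
      (\<integral>\<^sup>+ z \<in> ball 0 1. ennreal (norm (\<Sum>k=1..n. complex_of_real (\<alpha> k) / (z - zs k))) \<partial>lborel)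
        \<le> ennreal (40 * pi^2 * (\<Sum>k=1..n. (\<alpha> k)\<^sup>2) / (\<Sum>k=1..n. \<alpha> k))"
  proof (cases "n = 0")
    case True
    then show ?thesis by simp
  next
    case False
    then show ?thesis
      using nn_integral_weighted_cauchy_sum_le[OF pos] unfolding t_def[symmetric]
      by (intro exI[of _ "\<lambda>k. cis ((t (k-1) + t k) / 2)"]) auto
  qed
qed simp

end
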